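(* Let $D\geq 2$, let $\{|i\rangle\}_{i=0}^{D-1}$ be an orthonormal basis of $\mathbb{C}^D$, and define $P=\sum_{i,j}|i\rangle\langle j|\otimes|j\rangle\langle i|$, $P_{sym}=\frac12(I_{D^2}+P)$, $P_{as}=\frac12(I_{D^2}-P)$, and for $0\leq p\leq 1$ the Werner state $\rho_W=p\frac{2}{D^2+D}P_{sym}+(1-p)\frac{2}{D^2-D}P_{as}$ on $\mathbb{C}^D\otimes\mathbb{C}^D$. Then $$d_{\max}(\rho_W)=\frac{|2pD-D-1|}{D^2-1},$$ and this maximum is attained by every traceless unitary $U^B$ on $\mathbb{C}^D$.
   Context: For a state $\rho$ on $\mathbb{C}^M\otimes\mathbb{C}^N$ let $\rho_B=\mathrm{Tr}_A(\rho)$. A unitary $U^B$ on $\mathbb{C}^N$ is called cyclic for $\rho$ if $[\rho_B,U^B]=0$. Set $\rho_f=(I\otimes U^B)\rho(I\otimes U^{B\dagger})$ and define the Fu distance $d(\rho,U^B)=\frac{1}{\sqrt2}\|\rho-\rho_f\|_F$ (Frobenius norm $\|X\|_F=\sqrt{\mathrm{Tr}(X^\dagger X)}$). Define $d_{\max}(\rho)=\max\{d(\rho,U^B): U^B \text{ unitary},\ [\rho_B,U^B]=0\}$. *)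

theory Defs
  imports "HOL-Analysis.Analysis"
begin

text \<open>Matrices on C^n are complex^'n^'n (index type 'n, n = CARD('n)).
  Operators on C^M (x) C^N are indexed by the product type 'a \<times> 'b.\<close>

definition adj :: "complex^('n::finite)^('m::finite) \<Rightarrow> complex^'m^'n" where
  "adj A = (\<chi> i j. cnj (A $ j $ i))"

definition unitary_mat :: "complex^('n::finite)^'n \<Rightarrow> bool" where
  "unitary_mat U \<longleftrightarrow> adj U ** U = mat 1 \<and> U ** adj U = mat 1"

definition kron :: "complex^('a::finite)^'a \<Rightarrow> complex^('b::finite)^'b \<Rightarrow> complex^('a \<times> 'b)^('a \<times> 'b)" where
  "kron A B = (\<chi> i j. A $ fst i $ fst j * B $ snd i $ snd j)"

definition ptrace_A :: "complex^(('a::finite) \<times> ('b::finite))^('a \<times> 'b) \<Rightarrow> complex^'b^'b" where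
  "ptrace_A \<rho> = (\<chi> i j. \<Sum>k\<in>UNIV. \<rho> $ (k, i) $ (k, j))"

definition frob_norm :: "complex^('n::finite)^('m::finite) \<Rightarrow> real" where
  "frob_norm X = sqrt (\<Sum>i\<in>UNIV. \<Sum>j\<in>UNIV. (cmod (X $ i $ j))^2)"

definition cyclic :: "complex^(('a::finite) \<times> ('b::finite))^('a \<times> 'b) \<Rightarrow> complex^'b^'b \<Rightarrow> bool" where
  "cyclic \<rho> U \<longleftrightarrow> unitary_mat U \<and> ptrace_A \<rho> ** U = U ** ptrace_A \<rho>"

definition rho_f :: "complex^(('a::finite) \<times> ('b::finite))^('a \<times> 'b) \<Rightarrow> complex^'b^'b \<Rightarrow> complex^('a \<times> 'b)^('a \<times> 'b)" where
  "rho_f \<rho> U = kron (mat 1 :: complex^'a^'a) U ** \<rho> ** adj (kron (mat 1 :: complex^'a^'a) U)"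

definition fu_dist :: "complex^(('a::finite) \<times> ('b::finite))^('a \<times> 'b) \<Rightarrow> complex^'b^'b \<Rightarrow> real" where
  "fu_dist \<rho> U = (1 / sqrt 2) * frob_norm (\<rho> - rho_f \<rho> U)"

definition d_max :: "complex^(('a::finite) \<times> ('b::finite))^('a \<times> 'b) \<Rightarrow> real" where
  "d_max \<rho> = Sup {fu_dist \<rho> U | U. cyclic \<rho> U}"

definition orthonormal_basis :: "(('n::finite) \<Rightarrow> complex^'n) \<Rightarrow> bool" where
  "orthonormal_basis e \<longleftrightarrow>
     (\<forall>i j. (\<Sum>k\<in>UNIV. cnj (e i $ k) * e j $ k) = (if i = j then 1 else 0))"

definition ketbra :: "(('n::finite) \<Rightarrow> complex^'n) \<Rightarrow> 'n \<Rightarrow> 'n \<Rightarrow> complex^'n^'n" where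
  "ketbra e i j = (\<chi> a b. e i $ a * cnj (e j $ b))"

definition swapP :: "(('n::finite) \<Rightarrow> complex^'n) \<Rightarrow> complex^('n \<times> 'n)^('n \<times> 'n)" where
  "swapP e = (\<Sum>i\<in>UNIV. \<Sum>j\<in>UNIV. kron (ketbra e i j) (ketbra e j i))"

definition P_sym :: "(('n::finite) \<Rightarrow> complex^'n) \<Rightarrow> complex^('n \<times> 'n)^('n \<times> 'n)" where
  "P_sym e = (1/2) *\<^sub>R (mat 1 + swapP e)"

definition P_as :: "(('n::finite) \<Rightarrow> complex^'n) \<Rightarrow> complex^('n \<times> 'n)^('n \<times> 'n)" where
  "P_as e = (1/2) *\<^sub>R (mat 1 - swapP e)"

definition werner :: "(('n::finite) \<Rightarrow> complex^'n) \<Rightarrow> real \<Rightarrow> complex^('n \<times> 'n)^('n \<times> 'n)" where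
  "werner e p = (let D = real CARD('n) in
     (p * 2 / (D^2 + D)) *\<^sub>R P_sym e + ((1 - p) * 2 / (D^2 - D)) *\<^sub>R P_as e)"

end

theory Submission
  imports Defs
begin

text \<open>Writing D for the local dimension, the Werner state is a real combination a I + b P of the
  identity and the swap P. Its reduced state is scalar, so every unitary is cyclic. Conjugation
  by I \<otimes> U fixes I and moves P to a unitary P', and the cross term tr(P P'*) equals |tr U|^2, so
  the Fu distance is |b| sqrt(D^2 - |tr U|^2). It is maximal exactly for traceless U (the diagonal
  unitary of D-th roots of unity is one), with maximum |b| D.\<close>

lemma matrix_matrix_mult_component:
  "((A :: 'a::semiring_1^'k^'m) ** B) $ i $ j = (\<Sum>k\<in>UNIV. A $ i $ k * B $ k $ j)"
  by (simp add: matrix_matrix_mult_def)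

lemma matrix_add_rdistrib: "((A + B) ** C) = (A ** C) + (B ** C)"
  by (vector matrix_matrix_mult_def sum.distrib[symmetric] field_simps)

lemma mat_component: "(mat c :: 'a::zero^'n^'n) $ i $ j = (if i = j then c else 0)"
  by (simp add: mat_def)

lemma sum_UNIV_prod:
  "(\<Sum>x\<in>(UNIV :: ('a::finite \<times> 'b::finite) set). f x) = (\<Sum>a\<in>UNIV. \<Sum>b\<in>UNIV. f (a, b))"
  by (simp add: sum.cartesian_product)

lemma kron_mult: "kron A B ** kron C D = kron (A ** C) (B ** D)"
  by (simp add: vec_eq_iff kron_def matrix_matrix_mult_component sum_UNIV_prod sum_product mult_ac)

lemma adj_kron: "adj (kron A B) = kron (adj A) (adj B)"
  by (simp add: vec_eq_iff kron_def adj_def)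

lemma kron_mat_1: "kron (mat 1 :: complex^'a^'a) (mat 1 :: complex^'b^'b) = mat 1"
  by (simp add: vec_eq_iff kron_def mat_component prod_eq_iff)

lemma adj_mat_1: "adj (mat 1 :: complex^'n::finite^'n) = mat 1"
  by (simp add: vec_eq_iff adj_def mat_component)

lemma unitary_mat_kron:
  assumes "unitary_mat A" "unitary_mat B"
  shows "unitary_mat (kron A B)"
  using assms by (simp add: unitary_mat_def adj_kron kron_mult kron_mat_1)

lemma unitary_mat_mat_1: "unitary_mat (mat 1)"
  by (simp add: unitary_mat_def adj_mat_1)

lemma unitary_mat_rows:
  assumes "unitary_mat U"
  shows "(\<Sum>k\<in>UNIV. U $ i $ k * cnj (U $ j $ k)) = (if i = j then 1 else 0)"
proof -
  have "(U ** adj U) $ i $ j = mat 1 $ i $ j" using assms by (simp add: unitary_mat_def)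
  thus ?thesis by (simp add: matrix_matrix_mult_component adj_def mat_component)
qed

lemma unitary_mat_columns:
  assumes "unitary_mat U"
  shows "(\<Sum>k\<in>UNIV. cnj (U $ k $ i) * U $ k $ j) = (if i = j then 1 else 0)"
proof -
  have "(adj U ** U) $ i $ j = mat 1 $ i $ j" using assms by (simp add: unitary_mat_def)
  thus ?thesis by (simp add: matrix_matrix_mult_component adj_def mat_component)
qed

lemma rho_f_add: "rho_f (X + Y) U = rho_f X U + rho_f Y U"
  by (simp add: rho_f_def matrix_add_ldistrib matrix_add_rdistrib)

lemma rho_f_scaleR: "rho_f (c *\<^sub>R X) U = c *\<^sub>R rho_f X U"
  by (simp add: rho_f_def matrix_scalar_ac scalar_matrix_assoc)

lemma rho_f_mat_1:
  assumes "unitary_mat U"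
  shows "rho_f (mat 1 :: complex^('a::finite \<times> 'b::finite)^('a \<times> 'b)) U = mat 1"
proof -
  have "unitary_mat (kron (mat 1 :: complex^'a^'a) U)"
    using unitary_mat_kron[OF unitary_mat_mat_1 assms] .
  thus ?thesis by (simp add: rho_f_def unitary_mat_def)
qed

definition swap_mat :: "complex^('n::finite \<times> 'n)^('n \<times> 'n)" where
  "swap_mat = (\<chi> x y. if x = prod.swap y then 1 else 0)"

lemma swap_mat_component: "swap_mat $ x $ y = (if y = prod.swap x then 1 else 0)"
  by (auto simp: swap_mat_def)

lemma orthonormal_basis_complete:
  assumes "orthonormal_basis (e :: 'n::finite \<Rightarrow> complex^'n)"
  shows "(\<Sum>i\<in>UNIV. e i $ a * cnj (e i $ b)) = (if a = b then 1 else 0)"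
proof -
  define M :: "complex^'n^'n" where "M = (\<chi> k i. e i $ k)"
  have "adj M ** M = mat 1"
    using assms by (simp add: vec_eq_iff matrix_matrix_mult_component adj_def M_def
        orthonormal_basis_def mat_component)
  hence "M ** adj M = mat 1" using matrix_left_right_inverse by blast
  hence "(M ** adj M) $ a $ b = mat 1 $ a $ b" by simp
  thus ?thesis by (simp add: matrix_matrix_mult_component adj_def M_def mat_component)
qed

lemma swapP_eq_swap_mat:
  assumes "orthonormal_basis e"
  shows "swapP e = swap_mat"
proof -
  have "swapP e $ x $ y = (\<Sum>i\<in>UNIV. e i $ fst x * cnj (e i $ snd y))
      * (\<Sum>j\<in>UNIV. e j $ snd x * cnj (e j $ fst y))" for x y
    by (simp add: swapP_def sum_component kron_def ketbra_def sum_product mult_ac)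
  thus ?thesis
    by (simp add: vec_eq_iff swap_mat_def orthonormal_basis_complete[OF assms] prod_eq_iff)
qed

lemma ptrace_A_add: "ptrace_A (X + Y) = ptrace_A X + ptrace_A Y"
  by (simp add: vec_eq_iff ptrace_A_def sum.distrib)

lemma ptrace_A_scaleR: "ptrace_A (c *\<^sub>R X) = c *\<^sub>R ptrace_A X"
  by (simp add: vec_eq_iff ptrace_A_def scaleR_sum_right)

lemma ptrace_A_mat_1:
  "ptrace_A (mat 1 :: complex^('a::finite \<times> 'b::finite)^('a \<times> 'b)) = real CARD('a) *\<^sub>R mat 1"
  by (simp add: vec_eq_iff ptrace_A_def mat_component) (simp add: scaleR_conv_of_real)

lemma ptrace_A_swap_mat: "ptrace_A (swap_mat :: complex^('n::finite \<times> 'n)^('n \<times> 'n)) = mat 1"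
proof -
  have "(\<Sum>k\<in>UNIV. (swap_mat :: complex^('n \<times> 'n)^('n \<times> 'n)) $ (k, i) $ (k, j))
          = (\<Sum>k\<in>UNIV. if k = i then if i = j then 1 else 0 else 0)" for i j
    by (intro sum.cong) (auto simp: swap_mat_def)
  thus ?thesis by (simp add: vec_eq_iff ptrace_A_def mat_component)
qed

lemma cyclic_iff_unitary_mat_if_ptrace_A_scalar:
  assumes "ptrace_A \<rho> = c *\<^sub>R mat 1"
  shows "cyclic \<rho> U \<longleftrightarrow> unitary_mat U"
  using assms by (simp add: cyclic_def matrix_scalar_ac scalar_matrix_assoc[symmetric])

lemma matrix_mult_swap_mat_component: "(A ** swap_mat) $ x $ y = A $ x $ prod.swap y"
proof -
  have "(A ** swap_mat) $ x $ y = (\<Sum>z\<in>UNIV. if z = prod.swap y then A $ x $ z else 0)"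
    unfolding matrix_matrix_mult_component swap_mat_def by (intro sum.cong) auto
  thus ?thesis by simp
qed

lemma rho_f_swap_mat_component:
  fixes U :: "complex^'n::finite^'n"
  shows "rho_f swap_mat U $ x $ y = U $ snd x $ fst y * cnj (U $ snd y $ fst x)"
proof -
  define K :: "complex^('n \<times> 'n)^('n \<times> 'n)" where "K = kron (mat 1) U"
  have K: "K $ x $ z = (if fst x = fst z then U $ snd x $ snd z else 0)" for x z
    by (simp add: K_def kron_def mat_component)
  have "rho_f swap_mat U $ x $ y = (\<Sum>a\<in>UNIV. \<Sum>b\<in>UNIV. K $ x $ (b, a) * cnj (K $ y $ (a, b)))"
    unfolding rho_f_def K_def[symmetric] matrix_matrix_mult_component[of "K ** swap_mat"]
    by (simp add: matrix_mult_swap_mat_component sum_UNIV_prod adj_def)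
  also have "\<dots> = (\<Sum>a\<in>UNIV. \<Sum>b\<in>UNIV. if b = fst x then if a = fst y then
                     U $ snd x $ a * cnj (U $ snd y $ b) else 0 else 0)"
    by (intro sum.cong) (auto simp: K)
  finally show ?thesis by simp
qed

lemma unitary_mat_row_norm:
  assumes "unitary_mat U"
  shows "(\<Sum>k\<in>UNIV. (cmod (U $ i $ k))^2) = 1"
proof -
  have "complex_of_real (\<Sum>k\<in>UNIV. (cmod (U $ i $ k))^2) = 1"
    using unitary_mat_rows[OF assms, of i i] by (simp only: of_real_sum complex_norm_square) simp
  thus ?thesis by (simp only: of_real_eq_1_iff)
qed

lemma unitary_mat_column_norm:
  assumes "unitary_mat U"
  shows "(\<Sum>k\<in>UNIV. (cmod (U $ k $ j))^2) = 1"
proof -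
  have "complex_of_real (\<Sum>k\<in>UNIV. (cmod (U $ k $ j))^2) = 1"
    using unitary_mat_columns[OF assms, of j j]
    by (simp only: of_real_sum complex_norm_square) (simp add: mult.commute)
  thus ?thesis by (simp only: of_real_eq_1_iff)
qed

lemma frob_norm_power2: "(frob_norm X)^2 = (\<Sum>i\<in>UNIV. \<Sum>j\<in>UNIV. (cmod (X $ i $ j))^2)"
  by (simp add: frob_norm_def sum_nonneg)

lemma frob_norm_scaleR: "frob_norm (c *\<^sub>R X) = \<bar>c\<bar> * frob_norm X"
  by (simp add: frob_norm_def power_mult_distrib sum_distrib_left[symmetric] real_sqrt_mult)

lemma frob_norm_diff_power2:
  "(frob_norm (A - B))^2 = (frob_norm A)^2 + (frob_norm B)^2
     - 2 * (\<Sum>i\<in>UNIV. \<Sum>j\<in>UNIV. inner (A $ i $ j) (B $ i $ j))"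
proof -
  have "(cmod (a - b))^2 = (cmod a)^2 + (cmod b)^2 - 2 * inner a b" for a b :: complex
    by (simp add: dot_norm_neg field_simps)
  thus ?thesis
    by (simp add: frob_norm_power2 sum_subtractf sum.distrib sum_distrib_left)
qed

lemma frob_norm_swap_mat: "(frob_norm (swap_mat :: complex^('n::finite \<times> 'n)^('n \<times> 'n)))^2 = (real CARD('n))^2"
proof -
  have "(\<Sum>y\<in>UNIV. (cmod ((swap_mat :: complex^('n \<times> 'n)^('n \<times> 'n)) $ x $ y))^2) = 1" for x
    by (simp add: swap_mat_component if_distrib[of "\<lambda>z. (cmod z)^2"] cong: if_cong)
  thus ?thesis by (simp add: frob_norm_power2) (simp add: power2_eq_square)
qed

lemma frob_norm_rho_f_swap_mat:
  assumes "unitary_mat (U :: complex^'n::finite^'n)"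
  shows "(frob_norm (rho_f swap_mat U))^2 = (real CARD('n))^2"
proof -
  have "(frob_norm (rho_f swap_mat U))^2 = (\<Sum>i\<in>UNIV. \<Sum>j\<in>UNIV. \<Sum>k\<in>UNIV.
          (cmod (U $ j $ k))^2 * (\<Sum>l\<in>UNIV. (cmod (U $ l $ i))^2))"
    by (simp add: frob_norm_power2 rho_f_swap_mat_component sum_UNIV_prod norm_mult
        power_mult_distrib sum_distrib_left)
  also have "\<dots> = (real CARD('n))^2"
    by (simp add: unitary_mat_column_norm[OF assms] unitary_mat_row_norm[OF assms])
      (simp add: power2_eq_square)
  finally show ?thesis .
qed

lemma inner_swap_mat_rho_f_swap_mat:
  "(\<Sum>x\<in>UNIV. \<Sum>y\<in>UNIV. inner (swap_mat $ x $ y) (rho_f swap_mat U $ x $ y)) = (cmod (trace U))^2"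
proof -
  have "(\<Sum>x\<in>UNIV. \<Sum>y\<in>UNIV. inner (swap_mat $ x $ y) (rho_f swap_mat U $ x $ y))
      = (\<Sum>x\<in>UNIV. Re (rho_f swap_mat U $ x $ prod.swap x))"
    by (simp add: swap_mat_component if_distrib[of "\<lambda>z. inner z _"] cong: if_cong)
  also have "\<dots> = Re (\<Sum>i\<in>UNIV. \<Sum>j\<in>UNIV. U $ j $ j * cnj (U $ i $ i))"
    by (simp add: rho_f_swap_mat_component sum_UNIV_prod)
  also have "\<dots> = Re (cnj (trace U) * trace U)"
    by (simp add: trace_def sum_product mult.commute)
  finally show ?thesis by (simp add: complex_norm_square[symmetric] mult.commute)
qed

lemma frob_norm_swap_mat_diff_rho_f:
  assumes "unitary_mat (U :: complex^'n::finite^'n)"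
  shows "(frob_norm (swap_mat - rho_f swap_mat U))^2 = 2 * ((real CARD('n))^2 - (cmod (trace U))^2)"
  by (simp add: frob_norm_diff_power2 frob_norm_swap_mat frob_norm_rho_f_swap_mat[OF assms]
      inner_swap_mat_rho_f_swap_mat)

lemma frob_norm_eq_sqrtI: "(frob_norm X)^2 = c \<Longrightarrow> frob_norm X = sqrt c"
  by (auto simp: frob_norm_def sum_nonneg)

definition swap_pencil :: "real \<Rightarrow> real \<Rightarrow> complex^('n::finite \<times> 'n)^('n \<times> 'n)" where
  "swap_pencil a b = a *\<^sub>R mat 1 + b *\<^sub>R swap_mat"

lemma ptrace_A_swap_pencil:
  "ptrace_A (swap_pencil a b :: complex^('n::finite \<times> 'n)^('n \<times> 'n)) = (a * real CARD('n) + b) *\<^sub>R mat 1"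
  by (simp add: swap_pencil_def ptrace_A_add ptrace_A_scaleR ptrace_A_mat_1 ptrace_A_swap_mat scaleR_add_left)

lemma fu_dist_swap_pencil:
  assumes "unitary_mat (U :: complex^'n::finite^'n)"
  shows "fu_dist (swap_pencil a b) U = \<bar>b\<bar> * sqrt ((real CARD('n))^2 - (cmod (trace U))^2)"
proof -
  have "swap_pencil a b - rho_f (swap_pencil a b) U = b *\<^sub>R (swap_mat - rho_f swap_mat U)"
    by (simp add: swap_pencil_def rho_f_add rho_f_scaleR rho_f_mat_1[OF assms] scaleR_diff_right)
  moreover have "frob_norm (swap_mat - rho_f swap_mat U)
                   = sqrt 2 * sqrt ((real CARD('n))^2 - (cmod (trace U))^2)"
    using frob_norm_eq_sqrtI[OF frob_norm_swap_mat_diff_rho_f[OF assms]] by (simp only: real_sqrt_mult)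
  ultimately show ?thesis by (simp add: fu_dist_def frob_norm_scaleR)
qed

lemma fu_dist_swap_pencil_le:
  assumes "unitary_mat (U :: complex^'n::finite^'n)"
  shows "fu_dist (swap_pencil a b) U \<le> \<bar>b\<bar> * real CARD('n)"
proof -
  have "sqrt ((real CARD('n))^2 - (cmod (trace U))^2) \<le> sqrt ((real CARD('n))^2)"
    by (intro real_sqrt_le_mono) simp
  thus ?thesis by (simp add: fu_dist_swap_pencil[OF assms] mult_left_mono)
qed

lemma werner_swap_pencil:
  fixes e :: "'n::finite \<Rightarrow> complex^'n" and p :: real
  assumes onb: "orthonormal_basis e"
  defines "D \<equiv> real CARD('n)"
  defines "c\<^sub>s \<equiv> p * 2 / (D^2 + D)" and "c\<^sub>a \<equiv> (1 - p) * 2 / (D^2 - D)"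
  shows "werner e p = swap_pencil ((c\<^sub>s + c\<^sub>a) / 2) ((c\<^sub>s - c\<^sub>a) / 2)"
proof -
  have "werner e p = c\<^sub>s *\<^sub>R ((1/2) *\<^sub>R (mat 1 + swap_mat)) + c\<^sub>a *\<^sub>R ((1/2) *\<^sub>R (mat 1 - swap_mat))"
    by (simp add: werner_def Let_def P_sym_def P_as_def swapP_eq_swap_mat[OF onb] c\<^sub>s_def c\<^sub>a_def D_def)
  thus ?thesis
    by (simp add: swap_pencil_def scaleR_add_right scaleR_diff_right scaleR_add_left scaleR_diff_left
        add_divide_distrib diff_divide_distrib)
qed

lemma werner_swap_coefficient:
  fixes D p :: real
  assumes "D > 1"
  shows "\<bar>(p * 2 / (D^2 + D) - (1 - p) * 2 / (D^2 - D)) / 2\<bar> * D = \<bar>2 * p * D - D - 1\<bar> / (D^2 - 1)"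
proof -
  let ?c = "(p * 2 / (D^2 + D) - (1 - p) * 2 / (D^2 - D)) / 2"
  have factor: "D^2 + D = D * (D + 1)" "D^2 - D = D * (D - 1)" "D^2 - 1 = (D + 1) * (D - 1)"
    by (simp_all add: power2_eq_square algebra_simps)
  have "D \<noteq> 0" "D + 1 \<noteq> 0" "D - 1 \<noteq> 0" using assms by auto
  hence scaled: "?c * D = (2 * p * D - D - 1) / (D^2 - 1)"
    unfolding factor by (simp add: divide_simps) (simp add: algebra_simps)
  have "D^2 - 1 > 0" using assms unfolding factor by simp
  have "\<bar>?c\<bar> * D = \<bar>?c * D\<bar>" using assms by (simp add: abs_mult)
  also have "\<dots> = \<bar>2 * p * D - D - 1\<bar> / (D^2 - 1)"
    unfolding scaled abs_divide using \<open>D^2 - 1 > 0\<close> by simp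
  finally show ?thesis .
qed

lemma unitary_mat_diagonal:
  assumes "\<And>i. cmod (c i) = 1"
  shows "unitary_mat (\<chi> i j. if i = j then c i else 0)" (is "unitary_mat ?U")
proof -
  have unit: "c i * cnj (c i) = 1" "cnj (c i) * c i = 1" for i
    using assms[of i] by (simp_all add: complex_norm_square[symmetric] mult.commute)
  have "(adj ?U ** ?U) $ i $ j = (\<Sum>k\<in>UNIV. if k = i then if i = j then 1 else 0 else 0)" for i j
    unfolding matrix_matrix_mult_component adj_def by (intro sum.cong) (auto simp: unit)
  moreover
  have "(?U ** adj ?U) $ i $ j = (\<Sum>k\<in>UNIV. if k = i then if i = j then 1 else 0 else 0)" for i j
    unfolding matrix_matrix_mult_component adj_def by (intro sum.cong) (auto simp: unit)
  ultimately show ?thesis by (simp add: unitary_mat_def vec_eq_iff mat_component)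
qed

lemma ex_traceless_unitary_mat:
  assumes "CARD('n::finite) \<ge> 2"
  shows "\<exists>U :: complex^'n^'n. unitary_mat U \<and> trace U = 0"
proof -
  let ?D = "CARD('n)"
  obtain h where h: "bij_betw h (UNIV :: 'n set) {..<?D}"
    using ex_bij_betw_finite_nat[of "UNIV :: 'n set"] by (auto simp: atLeast0LessThan)
  define c where "c i = cis (2 * pi * real (h i) / real ?D)" for i
  define U :: "complex^'n^'n" where "U = (\<chi> i j. if i = j then c i else 0)"
  have "trace U = (\<Sum>i\<in>UNIV. cis (2 * pi * real (h i) / real ?D))"
    by (simp add: trace_def U_def c_def)
  also have "\<dots> = (\<Sum>k<?D. cis (2 * pi * real k / real ?D))"
    by (rule sum.reindex_bij_betw[OF h])
  also have "\<dots> = \<Sum>{z :: complex. z ^ ?D = 1}"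
    using Complex.bij_betw_roots_unity[of ?D] assms by (intro sum.reindex_bij_betw) simp
  also have "\<dots> = 0"
    using assms by (intro sum_roots_unity) simp
  finally have "trace U = 0" .
  moreover have "unitary_mat U"
    unfolding U_def by (rule unitary_mat_diagonal) (simp add: c_def)
  ultimately show ?thesis by blast
qed

lemma d_max_eqI:
  assumes "cyclic \<rho> U\<^sub>0" "fu_dist \<rho> U\<^sub>0 = v"
    and "\<And>U. cyclic \<rho> U \<Longrightarrow> fu_dist \<rho> U \<le> v"
  shows "d_max \<rho> = v"
  unfolding d_max_def using assms by (intro cSup_eq_maximum) auto

theorem theorem2:
  fixes e :: "'n::finite \<Rightarrow> complex^'n" and p :: real
  assumes "CARD('n) \<ge> 2"
    and "orthonormal_basis e"
    and "0 \<le> p" and "p \<le> 1"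
  shows "d_max (werner e p) =
           \<bar>2 * p * real CARD('n) - real CARD('n) - 1\<bar> / ((real CARD('n))^2 - 1)
         \<and> (\<forall>U :: complex^'n^'n. unitary_mat U \<and> trace U = 0 \<longrightarrow>
              cyclic (werner e p) U \<and>
              fu_dist (werner e p) U =
                \<bar>2 * p * real CARD('n) - real CARD('n) - 1\<bar> / ((real CARD('n))^2 - 1))"
proof -
  define D where "D = real CARD('n)"
  define c\<^sub>s where "c\<^sub>s = p * 2 / (D^2 + D)"
  define c\<^sub>a where "c\<^sub>a = (1 - p) * 2 / (D^2 - D)"
  define v where "v = \<bar>2 * p * D - D - 1\<bar> / (D^2 - 1)"
  have W: "werner e p = swap_pencil ((c\<^sub>s + c\<^sub>a) / 2) ((c\<^sub>s - c\<^sub>a) / 2)"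
    unfolding c\<^sub>s_def c\<^sub>a_def D_def by (rule werner_swap_pencil[OF assms(2)])
  have coefficient: "\<bar>(c\<^sub>s - c\<^sub>a) / 2\<bar> * D = v"
    unfolding c\<^sub>s_def c\<^sub>a_def v_def using assms(1) by (intro werner_swap_coefficient) (simp add: D_def)
  have cyclic: "cyclic (werner e p) U \<longleftrightarrow> unitary_mat U" for U
    unfolding W by (rule cyclic_iff_unitary_mat_if_ptrace_A_scalar[OF ptrace_A_swap_pencil])
  have attained: "cyclic (werner e p) U \<and> fu_dist (werner e p) U = v"
    if "unitary_mat U" "trace U = 0" for U
    using that coefficient unfolding cyclic by (simp add: W fu_dist_swap_pencil D_def)
  have bounded: "fu_dist (werner e p) U \<le> v" if "cyclic (werner e p) U" for U
    using fu_dist_swap_pencil_le[of U "(c\<^sub>s + c\<^sub>a) / 2" "(c\<^sub>s - c\<^sub>a) / 2"] that coefficient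
    unfolding cyclic by (simp add: W D_def)
  obtain U\<^sub>0 :: "complex^'n^'n" where "unitary_mat U\<^sub>0" "trace U\<^sub>0 = 0"
    using ex_traceless_unitary_mat[OF assms(1)] by blast
  hence "d_max (werner e p) = v"
    using attained bounded by (intro d_max_eqI) auto
  thus ?thesis using attained unfolding v_def D_def by blast
qed

end
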